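(* Let $\xi=e^{i\pi/5}$, $\tau=\frac{1+\sqrt5}{2}$, $L(n)=\{\sum_{j=0}^9 n_j\xi^j: n_j\in\mathbb{N}_0,\ \sum_j n_j\le n\}\cap\mathbb{R}$ for $n\in\mathbb{N}$, $x\mapsto x'$ the automorphism $a+b\sqrt5\mapsto a-b\sqrt5$ of $\mathbb{Q}[\sqrt5]$, and $\Sigma([-n,n])=\{x\in\mathbb{Z}+\mathbb{Z}\tau: x'\in[-n,n]\}$. Then the minimal distance between distinct points of $L(n)$ is greater than or equal to the minimal distance between distinct points of $\Sigma([-n,n])$.
   Context: The minimal distance of a set $S\subset\mathbb{R}$ is $\inf\{|x-y|: x,y\in S,\ x\neq y\}$. *)

theory Defs
  imports Complex_Main
begin

definition xi :: complex where "xi = cis (pi / 5)"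

definition tau :: real where "tau = (1 + sqrt 5) / 2"

definition conj5 :: "real \<Rightarrow> real" where
  "conj5 x = (THE y. \<exists>a b :: rat. x = of_rat a + of_rat b * sqrt 5 \<and> y = of_rat a - of_rat b * sqrt 5)"

definition L :: "nat \<Rightarrow> real set" where
  "L n = {x. \<exists>c :: nat \<Rightarrow> nat. (\<Sum>j<10. c j) \<le> n \<and>
              complex_of_real x = (\<Sum>j<10. of_nat (c j) * xi ^ j)}"

definition Sigma_win :: "nat \<Rightarrow> real set" where
  "Sigma_win n = {x. (\<exists>a b :: int. x = of_int a + of_int b * tau) \<and>
                     conj5 x \<in> {- real n .. real n}}"

definition min_dist :: "real set \<Rightarrow> real" where
  "min_dist S = Inf {\<bar>x - y\<bar> | x y. x \<in> S \<and> y \<in> S \<and> x \<noteq> y}"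

end

(*
  Since xi^5 = -1, a point x of L(n) is sum_{j<5} d_j xi^j with integers d_j = c_j - c_{j+5}.
  Its imaginary part is sin(pi/5) ((d_1 + d_4) + (d_2 + d_3) tau), so irrationality of tau forces
  d_4 = -d_1 and d_3 = -d_2, and then x = (d_0 - d_2) + (d_1 + d_2) tau lies in Z[tau].
  Its conjugate d_0 + d_1 (1 - tau) - d_2 tau has absolute value at most
  |d_0| + 2|d_1| + 2|d_2| = sum |d_j| <= sum c_j <= n, because tau < 2.
  So L(n) is a subset of Sigma([-n,n]), and passing to a subset with two points can only
  increase the minimal distance.
*)
theory Submission
  imports Defs "HOL-Computational_Algebra.Polynomial"
begin

lemma min_dist_antimono:
  assumes "S \<subseteq> T" "x \<in> S" "y \<in> S" "x \<noteq> y"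
  shows "min_dist T \<le> min_dist S"
  unfolding min_dist_def
proof (rule cInf_superset_mono)
  show "{\<bar>x - y\<bar> |x y. x \<in> S \<and> y \<in> S \<and> x \<noteq> y} \<noteq> {}"
    using assms(2-4) by blast
  show "bdd_below {\<bar>x - y\<bar> |x y. x \<in> T \<and> y \<in> T \<and> x \<noteq> y}"
    by (rule bdd_belowI[of _ 0]) auto
  show "{\<bar>x - y\<bar> |x y. x \<in> S \<and> y \<in> S \<and> x \<noteq> y}
    \<subseteq> {\<bar>x - y\<bar> |x y. x \<in> T \<and> y \<in> T \<and> x \<noteq> y}"
    using assms(1) by blast
qed

lemma sum_lessThan_double:
  fixes k :: nat
  shows "(\<Sum>j<2 * k. f j) = (\<Sum>j<k. f j + f (j + k))"
proof -
  have "(\<Sum>j<2 * k. f j) = (\<Sum>j\<in>{0..<k}. f j) + (\<Sum>j\<in>{0 + k..<k + k}. f j)"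
    using sum.atLeastLessThan_concat[of 0 k "k + k" f] by (simp add: mult_2 atLeast0LessThan)
  also have "\<dots> = (\<Sum>j<k. f j) + (\<Sum>j<k. f (j + k))"
    by (simp only: sum.shift_bounds_nat_ivl atLeast0LessThan)
  finally show ?thesis
    by (simp add: sum.distrib)
qed

lemma sum_pow_fold:
  fixes z :: "'a::comm_ring_1" and k :: nat
  assumes "z ^ k = -1"
  shows "(\<Sum>j<2 * k. f j * z ^ j) = (\<Sum>j<k. (f j - f (j + k)) * z ^ j)"
  unfolding sum_lessThan_double
  by (rule sum.cong) (simp_all add: power_add assms algebra_simps)

lemma sqrt5_irrational: "sqrt 5 \<notin> \<rat>"
proof
  assume "sqrt 5 \<in> \<rat>"
  moreover have "algebraic_int (sqrt 5)"
    by (intro algebraic_int_sqrt algebraic_int_numeral)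
  ultimately have "sqrt 5 \<in> \<int>"
    using rational_algebraic_int_is_int by blast
  then obtain k :: int where k: "sqrt 5 = of_int k"
    by (auto elim: Ints_cases)
  have "2 < sqrt 5" "sqrt 5 < 3"
    by (simp_all add: real_less_rsqrt real_sqrt_less_iff real_less_lsqrt)
  with k show False
    by simp
qed

lemma of_rat_sqrt5_eq_iff:
  "of_rat a + of_rat b * sqrt 5 = of_rat a' + of_rat b' * sqrt 5 \<longleftrightarrow> a = a' \<and> b = b'"
proof
  assume eq: "of_rat a + of_rat b * sqrt 5 = of_rat a' + of_rat b' * sqrt 5"
  have "b = b'"
  proof (rule ccontr)
    assume "b \<noteq> b'"
    with eq have "sqrt 5 = of_rat ((a' - a) / (b - b'))"
      by (simp add: of_rat_divide of_rat_diff field_simps)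
    with sqrt5_irrational show False
      by (metis Rats_of_rat)
  qed
  with eq show "a = a' \<and> b = b'"
    by simp
qed simp

lemma conj5_of_rat: "conj5 (of_rat a + of_rat b * sqrt 5) = of_rat a - of_rat b * sqrt 5"
  unfolding conj5_def by (rule the_equality) (auto simp: of_rat_sqrt5_eq_iff)

lemma int_tau_eq_of_rat:
  "of_int a + of_int b * tau = of_rat (of_int a + of_int b / 2) + of_rat (of_int b / 2) * sqrt 5"
  by (simp add: tau_def of_rat_add of_rat_divide of_rat_of_int_eq of_rat_mult field_simps)

lemma conj5_int_tau: "conj5 (of_int a + of_int b * tau) = of_int a + of_int b * (1 - tau)"
  unfolding int_tau_eq_of_rat conj5_of_rat
  by (simp add: tau_def of_rat_add of_rat_divide of_rat_of_int_eq of_rat_mult field_simps)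

lemma int_tau_eq_0_iff: "of_int a + of_int b * tau = 0 \<longleftrightarrow> a = 0 \<and> b = 0"
  using of_rat_sqrt5_eq_iff[of "of_int a + of_int b / 2" "of_int b / 2" 0 0]
  unfolding int_tau_eq_of_rat by auto

lemma tau_bounds: "1 < tau" "tau < 2"
proof -
  have "1 < sqrt 5" "sqrt 5 < 3"
    by (simp_all add: real_less_rsqrt real_sqrt_less_iff real_less_lsqrt)
  then show "1 < tau" "tau < 2"
    by (simp_all add: tau_def)
qed

lemma tau_squared: "tau\<^sup>2 = tau + 1"
  by (simp add: tau_def power2_eq_square field_simps)

lemma cos_pi_div_5: "cos (pi / 5) = tau / 2"
proof -
  define c where "c = cos (pi / 5)"
  have "cos (3 * (pi / 5)) = - cos (2 * (pi / 5))"
  proof -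
    have "3 * (pi / 5) = pi - 2 * (pi / 5)"
      by simp
    then show ?thesis
      by (simp only: cos_diff) simp
  qed
  then have "4 * c ^ 3 - 3 * c = - (2 * c\<^sup>2 - 1)"
    unfolding c_def cos_treble_cos cos_double_cos .
  then have factored: "(c + 1) * (4 * c\<^sup>2 - 2 * c - 1) = 0"
    by (simp add: algebra_simps power2_eq_square power3_eq_cube)
  have "cos (pi / 3) < c"
    unfolding c_def by (rule cos_monotone_0_pi) auto
  then have c_gt: "1 / 2 < c"
    by (simp add: cos_60)
  with factored have "4 * c\<^sup>2 - 2 * c - 1 = 0"
    by simp
  then have "(4 * c - 1)\<^sup>2 = 5"
    by (simp add: algebra_simps power2_eq_square)
  with c_gt have "sqrt 5 = 4 * c - 1"
    by (intro real_sqrt_unique) simp_all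
  then show ?thesis
    by (simp add: c_def tau_def)
qed

lemma cos_2pi_div_5: "cos (2 * pi / 5) = (tau - 1) / 2"
proof -
  have "cos (2 * pi / 5) = 2 * (tau / 2)\<^sup>2 - 1"
    using cos_double_cos[of "pi / 5"] by (simp add: cos_pi_div_5)
  then show ?thesis
    by (simp add: power_divide tau_squared field_simps)
qed

lemma sin_2pi_div_5: "sin (2 * pi / 5) = tau * sin (pi / 5)"
  using sin_double[of "pi / 5"] by (simp add: cos_pi_div_5)

lemma xi_pow: "xi ^ j = cis (real j * pi / 5)"
  by (simp add: xi_def DeMoivre)

lemma xi_pow_5: "xi ^ 5 = -1"
  by (simp add: xi_pow)

lemma xi_pow_reflect:
  assumes "j \<le> 5"
  shows "xi ^ (5 - j) = - cnj (xi ^ j)"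
proof -
  have "xi ^ (5 - j) = cis (pi + - (real j * pi / 5))"
    using assms by (simp add: xi_pow of_nat_diff field_simps)
  also have "\<dots> = cis pi * cis (- (real j * pi / 5))"
    by (rule cis_mult[symmetric])
  also have "\<dots> = - cnj (xi ^ j)"
    by (simp add: xi_pow cis_cnj)
  finally show ?thesis .
qed

lemma sum_lessThan_5: "(\<Sum>j<5::nat. f j) = f 0 + f 1 + f 2 + f 3 + f 4"
  by (simp add: eval_nat_numeral)

lemma real_sum_xi_pow:
  fixes d :: "nat \<Rightarrow> int"
  assumes x: "complex_of_real x = (\<Sum>j<5. of_int (d j) * xi ^ j)"
  shows "d 4 = - d 1" "d 3 = - d 2" "x = of_int (d 0 - d 2) + of_int (d 1 + d 2) * tau"
proof -
  define s where "s = sin (pi / 5)"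
  have "0 < s"
    by (simp add: s_def sin_gt_zero)
  have xi: "Re xi = tau / 2" "Im xi = s"
    by (simp_all add: xi_def s_def cos_pi_div_5)
  have xi2: "Re (xi ^ 2) = (tau - 1) / 2" "Im (xi ^ 2) = tau * s"
    by (simp_all add: xi_pow s_def cos_2pi_div_5 sin_2pi_div_5)
  have "xi ^ 3 = - cnj (xi ^ 2)" "xi ^ 4 = - cnj xi"
    using xi_pow_reflect[of 2] xi_pow_reflect[of 1] by simp_all
  with x have expand: "complex_of_real x = of_int (d 0) + of_int (d 1) * xi + of_int (d 2) * xi ^ 2
      - of_int (d 3) * cnj (xi ^ 2) - of_int (d 4) * cnj xi"
    by (simp add: sum_lessThan_5)
  have "s * (of_int (d 1 + d 4) + of_int (d 2 + d 3) * tau) = Im (complex_of_real x)"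
    unfolding expand by (simp add: xi xi2 algebra_simps del: complex_cnj_power)
  with \<open>0 < s\<close> have "of_int (d 1 + d 4) + of_int (d 2 + d 3) * tau = 0"
    by simp
  then show d4: "d 4 = - d 1" and d3: "d 3 = - d 2"
    unfolding int_tau_eq_0_iff by simp_all
  have "x = Re (complex_of_real x)"
    by simp
  also have "\<dots> = of_int (d 0) + of_int (d 1 - d 4) * (tau / 2) + of_int (d 2 - d 3) * ((tau - 1) / 2)"
    unfolding expand by (simp add: xi xi2 algebra_simps del: complex_cnj_power)
  finally show "x = of_int (d 0 - d 2) + of_int (d 1 + d 2) * tau"
    by (simp add: d3 d4 field_simps)
qed

lemma L_subset_Sigma_win: "L n \<subseteq> Sigma_win n"
proof
  fix x
  assume "x \<in> L n"
  then obtain c :: "nat \<Rightarrow> nat" where c_le: "(\<Sum>j<10. c j) \<le> n"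
    and x: "complex_of_real x = (\<Sum>j<10. of_nat (c j) * xi ^ j)"
    unfolding L_def by blast
  define d where "d j = int (c j) - int (c (j + 5))" for j
  have "complex_of_real x = (\<Sum>j<5. of_int (d j) * xi ^ j)"
    using x sum_pow_fold[OF xi_pow_5, of "\<lambda>j. of_nat (c j)"] by (simp add: d_def)
  note d = real_sum_xi_pow[OF this]
  have abs_mult_le_double: "\<bar>of_int k * t\<bar> \<le> 2 * \<bar>of_int k\<bar>" if "\<bar>t\<bar> \<le> 2" for k :: int and t :: real
    using mult_left_mono[OF that abs_ge_zero[of "of_int k :: real"]] by (simp add: abs_mult)
  have "\<bar>conj5 x\<bar> = \<bar>of_int (d 0) + of_int (d 1) * (1 - tau) + of_int (d 2) * (- tau)\<bar>"
    unfolding d(3) conj5_int_tau by (simp add: algebra_simps)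
  also have "\<dots> \<le> \<bar>of_int (d 0)\<bar> + 2 * \<bar>of_int (d 1)\<bar> + 2 * \<bar>of_int (d 2)\<bar>"
    using tau_bounds abs_mult_le_double[of "1 - tau" "d 1"] abs_mult_le_double[of "- tau" "d 2"] by linarith
  also have "\<dots> = (\<Sum>j<5. \<bar>of_int (d j)\<bar>)"
    using sum_lessThan_5[of "\<lambda>j. \<bar>of_int (d j) :: real\<bar>"] by (simp add: d(1,2))
  also have "\<dots> \<le> (\<Sum>j<5. real (c j + c (j + 5)))"
    by (rule sum_mono) (simp add: d_def)
  also have "\<dots> = real (\<Sum>j<2 * 5. c j)"
    by (simp only: sum_lessThan_double of_nat_sum)
  also have "\<dots> \<le> real n"
    using c_le by (simp del: of_nat_sum)
  finally show "x \<in> Sigma_win n"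
    using d(3) unfolding Sigma_win_def by (auto simp del: of_int_add of_int_diff)
qed

lemma of_nat_mem_L: "m \<le> n \<Longrightarrow> real m \<in> L n"
  unfolding L_def by (rule CollectI, rule exI[of _ "\<lambda>j. if j = 0 then m else 0"]) (simp add: eval_nat_numeral)

theorem lemma6p12:
  fixes n :: nat
  assumes "n \<ge> 1"
  shows "min_dist (L n) \<ge> min_dist (Sigma_win n)"
proof -
  have "real 0 \<in> L n" "real 1 \<in> L n"
    using assms by (simp_all only: of_nat_mem_L zero_le)
  from min_dist_antimono[OF L_subset_Sigma_win this] show ?thesis
    by simp
qed

end
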